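(* Let $(V,\star,\alpha,1)$ be a unital hom-associative algebra of type $I_2$. Then it is of type $II_3$ if and only if it is of type $II_1$.
   Context: Let $k$ be a commutative ring. A unital hom-associative algebra is a tuple $(V,\star,\alpha,1)$ where $V$ is a $k$-module, $\star:V\times V\to V$ is $k$-bilinear, $\alpha:V\to V$ is $k$-linear, and $1\in V$ satisfies $1\star x=x\star 1=x$ for all $x\in V$. It is of type $T$ if the identity for $T$ holds for all $x,y,z\in V$: $I_2$: $x\star(\alpha(y)\star z)=(x\star\alpha(y))\star z$; $II_1$: $x\star(\alpha(y)\star\alpha(z))=(\alpha(x)\star\alpha(y))\star z$; $II_3$: $\alpha(x)\star(\alpha(y)\star z)=(x\star\alpha(y))\star\alpha(z)$. *)

theory Defs
  imports Complex_Main
begin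

definition unital_hom_alg ::
  "('k::comm_ring_1 \<Rightarrow> 'v::ab_group_add \<Rightarrow> 'v) \<Rightarrow> ('v \<Rightarrow> 'v \<Rightarrow> 'v) \<Rightarrow> ('v \<Rightarrow> 'v) \<Rightarrow> 'v \<Rightarrow> bool" where
  "unital_hom_alg sc mul alpha e \<longleftrightarrow>
     module sc \<and>
     (\<forall>y. module_hom sc sc (\<lambda>x. mul x y)) \<and>
     (\<forall>x. module_hom sc sc (\<lambda>y. mul x y)) \<and>
     module_hom sc sc alpha \<and>
     (\<forall>x. mul e x = x \<and> mul x e = x)"

definition type_I2 :: "('v \<Rightarrow> 'v \<Rightarrow> 'v) \<Rightarrow> ('v \<Rightarrow> 'v) \<Rightarrow> bool" where
  "type_I2 mul alpha \<longleftrightarrow>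
     (\<forall>x y z. mul x (mul (alpha y) z) = mul (mul x (alpha y)) z)"

definition type_II1 :: "('v \<Rightarrow> 'v \<Rightarrow> 'v) \<Rightarrow> ('v \<Rightarrow> 'v) \<Rightarrow> bool" where
  "type_II1 mul alpha \<longleftrightarrow>
     (\<forall>x y z. mul x (mul (alpha y) (alpha z)) = mul (mul (alpha x) (alpha y)) z)"

definition type_II3 :: "('v \<Rightarrow> 'v \<Rightarrow> 'v) \<Rightarrow> ('v \<Rightarrow> 'v) \<Rightarrow> bool" where
  "type_II3 mul alpha \<longleftrightarrow>
     (\<forall>x y z. mul (alpha x) (mul (alpha y) z) = mul (mul x (alpha y)) (alpha z))"

end

theory Submission
  imports Defs
begin

(* The type I_2 identity  x * (alpha y * z) = (x * alpha y) * z  lets an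
   element alpha y move freely between the two factors of a product.  Applying it
   once to each side of the type II_3 identity gives
     alpha x * (alpha y * z) = (alpha x * alpha y) * z,
     (x * alpha y) * alpha z = x * (alpha y * alpha z),
   so the II_3 identity for (x, y, z) is exactly the II_1 identity for (x, y, z)
   read from right to left.  This equivalence holds pointwise for any binary
   operation and any map alpha. *)

lemma type_I2_assoc:
  assumes "type_I2 mul alpha"
  shows "mul x (mul (alpha y) z) = mul (mul x (alpha y)) z"
  using assms unfolding type_I2_def by blast

lemma type_I2_II3_iff_II1_instance:
  assumes "type_I2 mul alpha"
  shows "mul (alpha x) (mul (alpha y) z) = mul (mul x (alpha y)) (alpha z) \<longleftrightarrow>
         mul x (mul (alpha y) (alpha z)) = mul (mul (alpha x) (alpha y)) z"
proof -
  have lhs: "mul (alpha x) (mul (alpha y) z) = mul (mul (alpha x) (alpha y)) z"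
    using type_I2_assoc[OF assms] .
  have rhs: "mul (mul x (alpha y)) (alpha z) = mul x (mul (alpha y) (alpha z))"
    using type_I2_assoc[OF assms] by simp
  show ?thesis
    unfolding lhs rhs by (rule eq_commute)
qed

theorem proposition2p7:
  fixes sc :: "'k::comm_ring_1 \<Rightarrow> 'v::ab_group_add \<Rightarrow> 'v"
    and mul :: "'v \<Rightarrow> 'v \<Rightarrow> 'v" and alpha :: "'v \<Rightarrow> 'v" and e :: 'v
  assumes "unital_hom_alg sc mul alpha e"
    and "type_I2 mul alpha"
  shows "type_II3 mul alpha \<longleftrightarrow> type_II1 mul alpha"
  unfolding type_II3_def type_II1_def
  using type_I2_II3_iff_II1_instance[OF assms(2)] by simp

end
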